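(* Let $\Sigma$ be a ranked alphabet, $B$ a bi-locally finite strong bimonoid and $\mathcal{A}$ a $(\Sigma,B)$-wta. Then $[\![\mathcal{A}]\!]^{\mathrm{run}}=[\![\mathcal{R}(\mathcal{A})]\!]^{\mathrm{run}}$.
   Context: Ranked alphabet $\Sigma$ ($\Sigma^{(0)}\ne\emptyset$), trees $T_\Sigma$, positions $\mathrm{pos}(\xi)$; strong bimonoid $(B,\oplus,\otimes,\mathbb{0},\mathbb{1})$ (commutative monoid $(B,\oplus,\mathbb{0})$, monoid $(B,\otimes,\mathbb{1})$, $\mathbb{0}\ne\mathbb{1}$, $\mathbb{0}$ absorbing). $B$ is bi-locally finite if both $(B,\oplus,\mathbb{0})$ and $(B,\otimes,\mathbb{1})$ are locally finite (every finite subset generates a finite submonoid). For $b\in B$, $nb$ is the $n$-fold sum ($0b=\mathbb{0}$); if $\{nb\mid n\in\mathbb{N}\}$ is finite, the index $i(b)$ is the least $i\ge1$ with $ib=(i+k)b$ for some $k\ge1$ and the period $p(b)$ is the least $p\ge1$ with $i(b)b=(i(b)+p)b$. $(\Sigma,B)$-wta $\mathcal{A}=(Q,\delta,F)$: $Q$ finite nonempty, $\delta_k:Q^k\times\Sigma^{(k)}\times Q\to B$, $F:Q\to B$. Runs $\rho:\mathrm{pos}(\xi)\to Q$ ($R_{\mathcal{A}}(\xi)$; $R_{\mathcal{A}}(q,\xi)$ those with $\rho(\varepsilon)=q$), $\rho|_i(w)=\rho(iw)$, $\mathrm{wt}_{\mathcal{A}}(\rho)=\big(\bigotimes_{i=1}^k\mathrm{wt}_{\mathcal{A}}(\rho|_i)\big)\otimes\delta_k(\rho(1)\dots\rho(k),\sigma,\rho(\varepsilon))$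 for $\xi=\sigma(\xi_1,\dots,\xi_k)$; $[\![\mathcal{A}]\!]^{\mathrm{run}}(\xi)=\bigoplus_{\rho\in R_{\mathcal{A}}(\xi)}\mathrm{wt}_{\mathcal{A}}(\rho)\otimes F_{\rho(\varepsilon)}$. $H_{\mathcal{A}}$: smallest subset of $B$ containing $\bigcup_k\mathrm{im}(\delta_k)$ and closed under $\otimes$. When $H_{\mathcal{A}}$ is finite and every element of $H_{\mathcal{A}}\otimes\mathrm{im}(F)$ has finite order in $(B,\oplus,\mathbb{0})$ (the finite order property; it holds when $B$ is bi-locally finite), define $i_{\mathcal{A}}=\max\{i(b)\mid b\in H_{\mathcal{A}}\otimes\mathrm{im}(F)\}$, $p_{\mathcal{A}}=\mathrm{lcm}\{p(b)\mid b\in H_{\mathcal{A}}\otimes\mathrm{im}(F)\}$, $J_{\mathcal{A}}(n)=n$ if $n<i_{\mathcal{A}}$, else $i_{\mathcal{A}}+((n-i_{\mathcal{A}})\bmod p_{\mathcal{A}})$; $p_\xi(q,b)=|\{\rho\in R_{\mathcal{A}}(q,\xi)\mid\mathrm{wt}_{\mathcal{A}}(\rho)=b\}|$ and $\pi_\xi(q,b)=J_{\mathcal{A}}(p_\xi(q,b))$ for $(q,b)\in Q\times H_{\mathcal{A}}$. $\mathcal{R}(\mathcal{A})=(Q_{\mathcal{R}},\delta_{\mathcal{R}},F_{\mathcal{R}})$: $Q_{\mathcal{R}}=\{\pi_\xi\mid\xi\in T_\Sigma\}$; $(\delta_{\mathcal{R}})_k(\pi_{\xi_1}\dots\pi_{\xi_k},\sigma,\pi)=\mathbb{1}$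 if $\pi=\pi_{\sigma(\xi_1,\dots,\xi_k)}$ and $\mathbb{0}$ otherwise (independent of the choice of the $\xi_i$); $(F_{\mathcal{R}})_{\pi_\xi}=\bigoplus_{(q,b)\in Q\times H_{\mathcal{A}}}\pi_\xi(q,b)(b\otimes F_q)$. *)

theory Defs
  imports Main "HOL-Library.FuncSet"
begin

class strong_bimonoid = comm_monoid_add + monoid_mult + mult_zero + zero_neq_one

inductive_set add_submonoid :: "'a::comm_monoid_add set \<Rightarrow> 'a set" for S where
  zero: "0 \<in> add_submonoid S"
| gen: "a \<in> S \<Longrightarrow> a \<in> add_submonoid S"
| add: "a \<in> add_submonoid S \<Longrightarrow> b \<in> add_submonoid S \<Longrightarrow> a + b \<in> add_submonoid S"

inductive_set mult_submonoid :: "'a::monoid_mult set \<Rightarrow> 'a set" for S where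
  one: "1 \<in> mult_submonoid S"
| gen: "a \<in> S \<Longrightarrow> a \<in> mult_submonoid S"
| mult: "a \<in> mult_submonoid S \<Longrightarrow> b \<in> mult_submonoid S \<Longrightarrow> a * b \<in> mult_submonoid S"

definition bi_locally_finite :: "'a::strong_bimonoid itself \<Rightarrow> bool" where
  "bi_locally_finite _ \<longleftrightarrow>
     (\<forall>S::'a set. finite S \<longrightarrow> finite (add_submonoid S)) \<and>
     (\<forall>S::'a set. finite S \<longrightarrow> finite (mult_submonoid S))"

inductive_set mult_closure :: "'a::times set \<Rightarrow> 'a set" for S where
  gen: "a \<in> S \<Longrightarrow> a \<in> mult_closure S"
| mult: "a \<in> mult_closure S \<Longrightarrow> b \<in> mult_closure S \<Longrightarrow> a * b \<in> mult_closure S"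

fun nmul :: "nat \<Rightarrow> 'a::comm_monoid_add \<Rightarrow> 'a" where
  "nmul 0 b = 0"
| "nmul (Suc n) b = nmul n b + b"

definition idx :: "'a::comm_monoid_add \<Rightarrow> nat" where
  "idx b = (LEAST i. 1 \<le> i \<and> (\<exists>k\<ge>1. nmul i b = nmul (i + k) b))"

definition per :: "'a::comm_monoid_add \<Rightarrow> nat" where
  "per b = (LEAST p. 1 \<le> p \<and> nmul (idx b) b = nmul (idx b + p) b)"

datatype 'f tree = Nd 'f "'f tree list"

definition ranked_alphabet :: "'f set \<Rightarrow> ('f \<Rightarrow> nat) \<Rightarrow> bool" where
  "ranked_alphabet Sig rk \<longleftrightarrow> finite Sig \<and> (\<exists>f\<in>Sig. rk f = 0)"

inductive_set trees :: "'f set \<Rightarrow> ('f \<Rightarrow> nat) \<Rightarrow> 'f tree set" for Sig rk where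
  "f \<in> Sig \<Longrightarrow> length ts = rk f \<Longrightarrow> (\<forall>t\<in>set ts. t \<in> trees Sig rk) \<Longrightarrow> Nd f ts \<in> trees Sig rk"

text \<open>Positions (children numbered from 1).\<close>
inductive is_pos :: "'f tree \<Rightarrow> nat list \<Rightarrow> bool" where
  root: "is_pos t []"
| child: "1 \<le> i \<Longrightarrow> i \<le> length ts \<Longrightarrow> is_pos (ts ! (i - 1)) w \<Longrightarrow> is_pos (Nd f ts) (i # w)"

definition pos :: "'f tree \<Rightarrow> nat list set" where
  "pos t = {w. is_pos t w}"

text \<open>delta qs f q stands for delta_k(qs, f, q) with k = length qs = rk f.\<close>
definition wta :: "'f set \<Rightarrow> ('f \<Rightarrow> nat) \<Rightarrow> 'q set \<Rightarrow> ('q list \<Rightarrow> 'f \<Rightarrow> 'q \<Rightarrow> 'b) \<Rightarrow> ('q \<Rightarrow> 'b) \<Rightarrow> bool" where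
  "wta Sig rk Q \<delta> F \<longleftrightarrow> finite Q \<and> Q \<noteq> {}"

definition runs :: "'q set \<Rightarrow> 'f tree \<Rightarrow> (nat list \<Rightarrow> 'q) set" where
  "runs Q t = pos t \<rightarrow>\<^sub>E Q"

definition runs_at :: "'q set \<Rightarrow> 'q \<Rightarrow> 'f tree \<Rightarrow> (nat list \<Rightarrow> 'q) set" where
  "runs_at Q q t = {\<rho> \<in> runs Q t. \<rho> [] = q}"

fun run_wt :: "('q list \<Rightarrow> 'f \<Rightarrow> 'q \<Rightarrow> 'b::monoid_mult) \<Rightarrow> 'f tree \<Rightarrow> (nat list \<Rightarrow> 'q) \<Rightarrow> 'b" where
  "run_wt \<delta> (Nd f ts) = (\<lambda>\<rho>.
     prod_list (map (\<lambda>(i, g). g (\<lambda>w. \<rho> (i # w))) (zip [1..<Suc (length ts)] (map (run_wt \<delta>) ts)))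
     * \<delta> (map (\<lambda>i. \<rho> [i]) [1..<Suc (length ts)]) f (\<rho> []))"

definition run_sem :: "'q set \<Rightarrow> ('q list \<Rightarrow> 'f \<Rightarrow> 'q \<Rightarrow> 'b::strong_bimonoid) \<Rightarrow> ('q \<Rightarrow> 'b) \<Rightarrow> 'f tree \<Rightarrow> 'b" where
  "run_sem Q \<delta> F t = (\<Sum>\<rho>\<in>runs Q t. run_wt \<delta> t \<rho> * F (\<rho> []))"

definition H_A :: "'f set \<Rightarrow> ('f \<Rightarrow> nat) \<Rightarrow> 'q set \<Rightarrow> ('q list \<Rightarrow> 'f \<Rightarrow> 'q \<Rightarrow> 'b::strong_bimonoid) \<Rightarrow> 'b set" where
  "H_A Sig rk Q \<delta> = mult_closure
     {\<delta> qs f q | qs f q. f \<in> Sig \<and> length qs = rk f \<and> set qs \<subseteq> Q \<and> q \<in> Q}"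

definition HF_A :: "'f set \<Rightarrow> ('f \<Rightarrow> nat) \<Rightarrow> 'q set \<Rightarrow> ('q list \<Rightarrow> 'f \<Rightarrow> 'q \<Rightarrow> 'b::strong_bimonoid) \<Rightarrow> ('q \<Rightarrow> 'b) \<Rightarrow> 'b set" where
  "HF_A Sig rk Q \<delta> F = {h * F q | h q. h \<in> H_A Sig rk Q \<delta> \<and> q \<in> Q}"

definition i_A where
  "i_A Sig rk Q \<delta> F = Max (idx ` HF_A Sig rk Q \<delta> F)"

definition p_A where
  "p_A Sig rk Q \<delta> F = Lcm (per ` HF_A Sig rk Q \<delta> F)"

definition J_A :: "'f set \<Rightarrow> ('f \<Rightarrow> nat) \<Rightarrow> 'q set \<Rightarrow> ('q list \<Rightarrow> 'f \<Rightarrow> 'q \<Rightarrow> 'b::strong_bimonoid) \<Rightarrow> ('q \<Rightarrow> 'b) \<Rightarrow> nat \<Rightarrow> nat" where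
  "J_A Sig rk Q \<delta> F n =
     (if n < i_A Sig rk Q \<delta> F then n
      else i_A Sig rk Q \<delta> F + ((n - i_A Sig rk Q \<delta> F) mod p_A Sig rk Q \<delta> F))"

definition p_xi :: "'q set \<Rightarrow> ('q list \<Rightarrow> 'f \<Rightarrow> 'q \<Rightarrow> 'b::strong_bimonoid) \<Rightarrow> 'f tree \<Rightarrow> 'q \<Rightarrow> 'b \<Rightarrow> nat" where
  "p_xi Q \<delta> t q b = card {\<rho> \<in> runs_at Q q t. run_wt \<delta> t \<rho> = b}"

text \<open>pi_xi as a function on Q x H_A (extended by 0 outside Q x H_A).\<close>
definition pi_xi :: "'f set \<Rightarrow> ('f \<Rightarrow> nat) \<Rightarrow> 'q set \<Rightarrow> ('q list \<Rightarrow> 'f \<Rightarrow> 'q \<Rightarrow> 'b::strong_bimonoid) \<Rightarrow> ('q \<Rightarrow> 'b) \<Rightarrow> 'f tree \<Rightarrow> ('q \<times> 'b \<Rightarrow> nat)" where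
  "pi_xi Sig rk Q \<delta> F t = (\<lambda>(q, b).
     if q \<in> Q \<and> b \<in> H_A Sig rk Q \<delta> then J_A Sig rk Q \<delta> F (p_xi Q \<delta> t q b) else 0)"

definition R_states where
  "R_states Sig rk Q \<delta> F = pi_xi Sig rk Q \<delta> F ` trees Sig rk"

text \<open>delta_R(pi_xi1 ... pi_xik, sigma, pi) = 1 iff pi = pi_{sigma(xi1,...,xik)}; representatives chosen
  by Hilbert choice (the value is independent of the choice).  Arguments outside the domain
  Q_R^k x Sigma^(k) x Q_R get 0.\<close>
definition R_delta where
  "R_delta Sig rk Q \<delta> F ps f p =
     (if f \<in> Sig \<and> length ps = rk f \<and> set ps \<subseteq> R_states Sig rk Q \<delta> F \<and> p \<in> R_states Sig rk Q \<delta> F then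
        (let ts = (SOME ts. length ts = length ps \<and>
                     (\<forall>i<length ps. ts ! i \<in> trees Sig rk \<and> pi_xi Sig rk Q \<delta> F (ts ! i) = ps ! i))
         in if p = pi_xi Sig rk Q \<delta> F (Nd f ts) then 1 else 0)
      else 0)"

definition R_final where
  "R_final Sig rk Q \<delta> F p =
     (\<Sum>(q, b)\<in>Q \<times> H_A Sig rk Q \<delta>. nmul (p (q, b)) (b * F q))"

end

(* Every run weight of A lies in the finite set H_A, so grouping the runs on xi by root state q and
   weight b gives [[A]](xi) = sum over (q, b) of p_xi(q, b) (b * F q). For c in H_A * im(F) the
   multiple n c depends only on J_A(n), which reduces n modulo the index and period of c; hence
   p_xi may be replaced by pi_xi. Splitting a run at the root expresses p_sigma(xi_1 ... xi_k) as a
   sum of products of the p_xi_i, and J_A is compatible with + and *, so pi_sigma(xi_1 ... xi_k) is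
   determined by pi_xi_1, ..., pi_xi_k. Therefore R(A) is deterministic with 0/1 weights: its only
   run of nonzero weight on xi labels each position by pi of the subtree there and has weight 1,
   whence [[R(A)]](xi) = F_R(pi_xi) = [[A]](xi). *)

theory Submission
  imports Defs
begin

section \<open>Reduction modulo an index and a period\<close>

definition trunc_period :: "nat \<Rightarrow> nat \<Rightarrow> nat \<Rightarrow> nat" where
  "trunc_period i p n = (if n < i then n else i + (n - i) mod p)"

lemma trunc_period_idem [simp]: "trunc_period i p (trunc_period i p n) = trunc_period i p n"
  unfolding trunc_period_def by auto

lemma trunc_period_eq_iff:
  "trunc_period i p n = trunc_period i p m \<longleftrightarrow> n = m \<or> (i \<le> n \<and> i \<le> m \<and> n mod p = m mod p)"
proof -
  have "(n - i) mod p = (m - i) mod p \<longleftrightarrow> n mod p = m mod p" if "i \<le> n" "i \<le> m"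
    using that by (metis Nat.diff_diff_eq diff_le_mono linorder_le_cases mod_eq_dvd_iff_nat)
  then show ?thesis
    unfolding trunc_period_def by auto
qed

lemma trunc_period_cong_add:
  "trunc_period i p n = trunc_period i p m \<Longrightarrow> trunc_period i p (n + c) = trunc_period i p (m + c)"
  unfolding trunc_period_eq_iff by (auto intro: mod_add_cong)

lemma trunc_period_cong_mult:
  "trunc_period i p n = trunc_period i p m \<Longrightarrow> trunc_period i p (n * c) = trunc_period i p (m * c)"
  unfolding trunc_period_eq_iff
proof (elim disjE conjE)
  assume "i \<le> n" "i \<le> m" "n mod p = m mod p"
  show "n * c = m * c \<or> i \<le> n * c \<and> i \<le> m * c \<and> n * c mod p = m * c mod p"
  proof (cases "c = 0")
    case False
    then have "n \<le> n * c" "m \<le> m * c"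
      by simp_all
    then have "i \<le> n * c" "i \<le> m * c"
      using \<open>i \<le> n\<close> \<open>i \<le> m\<close> by linarith+
    moreover have "n * c mod p = m * c mod p"
      using \<open>n mod p = m mod p\<close> by (rule mod_mult_cong) simp
    ultimately show ?thesis
      by simp
  qed simp
qed simp

lemma trunc_period_add:
  "trunc_period i p (a + b) = trunc_period i p (trunc_period i p a + trunc_period i p b)"
  by (metis add.commute trunc_period_cong_add trunc_period_idem)

lemma trunc_period_mult:
  "trunc_period i p (a * b) = trunc_period i p (trunc_period i p a * trunc_period i p b)"
  by (metis mult.commute trunc_period_cong_mult trunc_period_idem)

lemma trunc_period_sum:
  "trunc_period i p (sum g A) = trunc_period i p (\<Sum>x\<in>A. trunc_period i p (g x))"
proof (induction A rule: infinite_finite_induct)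
  case (insert x A)
  then show ?case
    by (simp, metis trunc_period_add trunc_period_idem)
qed simp_all

lemma trunc_period_prod:
  "trunc_period i p (prod g A) = trunc_period i p (\<Prod>x\<in>A. trunc_period i p (g x))"
proof (induction A rule: infinite_finite_induct)
  case (insert x A)
  then show ?case
    by (simp, metis trunc_period_mult trunc_period_idem)
qed simp_all

lemma nmul_add: "nmul (m + n) c = nmul m c + nmul n c"
  by (induction n) (simp_all add: add.assoc)

lemma sum_const_eq_nmul: "(\<Sum>x\<in>A. c) = nmul (card A) c"
  by (induction A rule: infinite_finite_induct) (simp_all add: add.commute)

lemma nmul_in_add_submonoid: "nmul n c \<in> add_submonoid {c}"
  by (induction n) (auto intro: add_submonoid.intros)

lemma nmul_repeats:
  assumes "finite (add_submonoid {c})"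
  shows "\<exists>i\<ge>1. \<exists>k\<ge>1. nmul i c = nmul (i + k) c"
proof -
  have "\<not> inj (\<lambda>n. nmul (Suc n) c)"
    using assms nmul_in_add_submonoid
    by (metis finite_imageD finite_subset image_subsetI infinite_UNIV_nat)
  then obtain a b where "a < b" "nmul (Suc a) c = nmul (Suc b) c"
    unfolding inj_def by (metis linorder_neqE_nat)
  then show ?thesis
    by (intro exI[of _ "Suc a"] conjI exI[of _ "b - a"]) (simp_all del: nmul.simps)
qed

lemma
  assumes "finite (add_submonoid {c})"
  shows per_ge_1: "1 \<le> per c"
    and nmul_idx_per: "nmul (idx c + per c) c = nmul (idx c) c"
proof -
  have "1 \<le> idx c \<and> (\<exists>k\<ge>1. nmul (idx c) c = nmul (idx c + k) c)"
    unfolding idx_def by (rule LeastI_ex) (rule nmul_repeats[OF assms])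
  then have "1 \<le> per c \<and> nmul (idx c) c = nmul (idx c + per c) c"
    unfolding per_def by (metis (mono_tags, lifting) LeastI)
  then show "1 \<le> per c" "nmul (idx c + per c) c = nmul (idx c) c"
    by simp_all
qed

lemma nmul_periodic:
  assumes "finite (add_submonoid {c})" "idx c \<le> n"
  shows "nmul (n + j * per c) c = nmul n c"
proof (induction j)
  case (Suc j)
  obtain d where n: "n = idx c + d"
    using assms(2) le_Suc_ex by blast
  have "nmul (n + Suc j * per c) c = nmul (idx c + per c) c + nmul (d + j * per c) c"
    by (simp add: n algebra_simps flip: nmul_add)
  also have "\<dots> = nmul (n + j * per c) c"
    by (simp add: nmul_idx_per[OF assms(1)] n add.assoc flip: nmul_add)
  finally show ?case
    using Suc by simp
qed simp

lemma nmul_trunc_period: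
  assumes "finite (add_submonoid {c})" "idx c \<le> i" "per c dvd p"
  shows "nmul (trunc_period i p n) c = nmul n c"
proof (cases "n < i")
  case False
  obtain m where p: "p = m * per c"
    using assms(3) by (metis dvdE mult.commute)
  have "n = (i + (n - i) mod p) + ((n - i) div p * m) * per c"
    using False mod_div_mult_eq[of "n - i" p] by (simp add: p mult.assoc)
  then have "nmul n c = nmul (i + (n - i) mod p) c"
    using nmul_periodic[OF assms(1)] assms(2) by (metis trans_le_add1)
  then show ?thesis
    using False by (simp add: trunc_period_def)
qed (simp add: trunc_period_def)

section \<open>Runs and their decomposition at the root\<close>

lemma card_PiE_filter:
  assumes "finite I" "\<And>i. i \<in> I \<Longrightarrow> finite (S i)" "\<And>i. i \<in> I \<Longrightarrow> finite (X i)"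
    and "\<And>i s. i \<in> I \<Longrightarrow> s \<in> S i \<Longrightarrow> g i s \<in> X i"
  shows "card {\<sigma> \<in> Pi\<^sub>E I S. C (\<lambda>i\<in>I. g i (\<sigma> i))}
       = (\<Sum>x\<in>Pi\<^sub>E I X. if C x then (\<Prod>i\<in>I. card {s \<in> S i. g i s = x i}) else 0)"
proof -
  define G where "G \<sigma> = (\<lambda>i\<in>I. g i (\<sigma> i))" for \<sigma>
  let ?A = "{\<sigma> \<in> Pi\<^sub>E I S. C (G \<sigma>)}"
  have fibre: "{\<sigma> \<in> ?A. G \<sigma> = x} = (if C x then Pi\<^sub>E I (\<lambda>i. {s \<in> S i. g i s = x i}) else {})"
    if "x \<in> Pi\<^sub>E I X" for x
  proof -
    have filter_eq: "{\<sigma> \<in> ?A. G \<sigma> = x} = {\<sigma> \<in> Pi\<^sub>E I S. C x \<and> G \<sigma> = x}"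
      by auto
    have G_eq: "G \<sigma> = x \<longleftrightarrow> (\<forall>i\<in>I. g i (\<sigma> i) = x i)" for \<sigma>
      using that by (metis G_def PiE_restrict restrict_apply' restrict_ext)
    show ?thesis
      unfolding filter_eq unfolding G_eq by (auto simp: PiE_iff extensional_def)
  qed
  have "card ?A = (\<Sum>x\<in>Pi\<^sub>E I X. card {\<sigma> \<in> ?A. G \<sigma> = x})"
    unfolding card_eq_sum
  proof (rule sum.group[symmetric])
    show "finite ?A"
      using assms(1,2) by (simp add: finite_PiE)
    show "finite (Pi\<^sub>E I X)"
      using assms(1,3) by (simp add: finite_PiE)
    show "G ` ?A \<subseteq> Pi\<^sub>E I X"
      using assms(4) by (auto simp: G_def PiE_iff)
  qed
  also have "\<dots> = (\<Sum>x\<in>Pi\<^sub>E I X. if C x then (\<Prod>i\<in>I. card {s \<in> S i. g i s = x i}) else 0)"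
    using assms(1) by (intro sum.cong refl) (simp only: fibre, simp add: card_PiE)
  finally show ?thesis
    unfolding G_def .
qed

lemma pos_Nd:
  "w \<in> pos (Nd f ts) \<longleftrightarrow> w = [] \<or> (\<exists>i w'. w = Suc i # w' \<and> i < length ts \<and> w' \<in> pos (ts ! i))"
proof
  assume "w \<in> pos (Nd f ts)"
  then have "is_pos (Nd f ts) w"
    by (simp add: pos_def)
  then show "w = [] \<or> (\<exists>i w'. w = Suc i # w' \<and> i < length ts \<and> w' \<in> pos (ts ! i))"
    by cases (auto simp: pos_def intro!: exI[of _ "_ - 1"])
qed (auto simp: pos_def intro: is_pos.intros)

lemma Nil_in_pos [simp]: "[] \<in> pos t"
  by (simp add: pos_def is_pos.root)

lemma Cons_in_pos_Nd [simp]: "Suc i # w \<in> pos (Nd f ts) \<longleftrightarrow> i < length ts \<and> w \<in> pos (ts ! i)"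
  by (auto simp: pos_Nd)

lemma pos_NdE:
  assumes "w \<in> pos (Nd f ts)"
  obtains "w = []" | i w' where "w = Suc i # w'" "i < length ts" "w' \<in> pos (ts ! i)"
  using assms unfolding pos_Nd by blast

lemma finite_pos: "finite (pos t)"
proof (induction t)
  case (Nd f ts)
  have "pos (Nd f ts) = insert [] (\<Union>i<length ts. (#) (Suc i) ` pos (ts ! i))"
    by (auto elim: pos_NdE)
  then show ?case
    using Nd by simp
qed

lemma finite_runs: "finite Q \<Longrightarrow> finite (runs Q t)"
  unfolding runs_def by (intro finite_PiE finite_pos)

lemma run_root_in: "\<rho> \<in> runs Q t \<Longrightarrow> \<rho> [] \<in> Q"
  unfolding runs_def by auto

lemma run_child_root_in: "\<rho> \<in> runs Q (Nd f ts) \<Longrightarrow> i < length ts \<Longrightarrow> \<rho> [Suc i] \<in> Q"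
  unfolding runs_def by auto

lemma run_wt_Nd:
  "run_wt \<delta> (Nd f ts) \<rho> =
     prod_list (map (\<lambda>i. run_wt \<delta> (ts ! i) (\<lambda>w. \<rho> (Suc i # w))) [0..<length ts])
     * \<delta> (map (\<lambda>i. \<rho> [Suc i]) [0..<length ts]) f (\<rho> [])"
proof -
  have "[1..<Suc (length ts)] = map Suc [0..<length ts]"
    by (simp add: map_Suc_upt)
  moreover have "zip (map Suc [0..<length ts]) (map (run_wt \<delta>) ts)
      = map (\<lambda>i. (Suc i, run_wt \<delta> (ts ! i))) [0..<length ts]"
    by (rule nth_equalityI) simp_all
  ultimately show ?thesis
    by (simp only: run_wt.simps map_map o_def prod.case)
qed

declare run_wt.simps [simp del]

lemma run_wt_cong:
  "(\<And>w. w \<in> pos t \<Longrightarrow> \<rho> w = \<rho>' w) \<Longrightarrow> run_wt \<delta> t \<rho> = run_wt \<delta> t \<rho>'"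
proof (induction t arbitrary: \<rho> \<rho>')
  case (Nd f ts)
  have children: "map (\<lambda>i. run_wt \<delta> (ts ! i) (\<lambda>w. \<rho> (Suc i # w))) [0..<length ts]
      = map (\<lambda>i. run_wt \<delta> (ts ! i) (\<lambda>w. \<rho>' (Suc i # w))) [0..<length ts]"
    by (intro map_cong refl Nd.IH) (simp_all add: Nd.prems)
  have child_roots: "map (\<lambda>i. \<rho> [Suc i]) [0..<length ts] = map (\<lambda>i. \<rho>' [Suc i]) [0..<length ts]"
    by (simp add: Nd.prems)
  show ?case
    unfolding run_wt_Nd children child_roots by (simp add: Nd.prems)
qed

definition child_runs :: "'f tree list \<Rightarrow> (nat list \<Rightarrow> 'q) \<Rightarrow> nat \<Rightarrow> nat list \<Rightarrow> 'q" where
  "child_runs ts \<rho> = (\<lambda>i\<in>{..<length ts}. \<lambda>w\<in>pos (ts ! i). \<rho> (Suc i # w))"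

definition graft_runs :: "'f \<Rightarrow> 'f tree list \<Rightarrow> 'q \<Rightarrow> (nat \<Rightarrow> nat list \<Rightarrow> 'q) \<Rightarrow> nat list \<Rightarrow> 'q" where
  "graft_runs f ts q \<sigma> = (\<lambda>w\<in>pos (Nd f ts). case w of [] \<Rightarrow> q | j # w' \<Rightarrow> \<sigma> (j - 1) w')"

lemma child_runs_in_runs:
  "\<rho> \<in> runs Q (Nd f ts) \<Longrightarrow> child_runs ts \<rho> \<in> (\<Pi>\<^sub>E i\<in>{..<length ts}. runs Q (ts ! i))"
  unfolding runs_def child_runs_def by (auto simp: restrict_PiE_iff)

lemma graft_child_runs:
  assumes "\<rho> \<in> runs_at Q q (Nd f ts)"
  shows "graft_runs f ts q (child_runs ts \<rho>) = \<rho>"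
proof
  fix w
  have \<rho>: "\<rho> \<in> extensional (pos (Nd f ts))" "\<rho> [] = q"
    using assms by (auto simp: runs_at_def runs_def PiE_iff)
  show "graft_runs f ts q (child_runs ts \<rho>) w = \<rho> w"
  proof (cases "w \<in> pos (Nd f ts)")
    case True
    then show ?thesis
      by (cases rule: pos_NdE) (simp_all add: graft_runs_def child_runs_def \<rho>(2))
  next
    case False
    then show ?thesis
      by (simp add: graft_runs_def extensional_arb[OF \<rho>(1) False])
  qed
qed

lemma child_graft_runs:
  assumes "\<sigma> \<in> (\<Pi>\<^sub>E i\<in>{..<length ts}. runs Q (ts ! i))"
  shows "child_runs ts (graft_runs f ts q \<sigma>) = \<sigma>"
proof (intro ext)
  fix i w
  show "child_runs ts (graft_runs f ts q \<sigma>) i w = \<sigma> i w"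
  proof (cases "i < length ts")
    case True
    have "\<sigma> i \<in> extensional (pos (ts ! i))"
      using assms True by (auto simp: runs_def PiE_iff)
    then have "\<sigma> i w = undefined" if "w \<notin> pos (ts ! i)"
      using that by (rule extensional_arb)
    with True show ?thesis
      by (cases "w \<in> pos (ts ! i)") (simp_all add: graft_runs_def child_runs_def)
  next
    case False
    then have "\<sigma> i = undefined"
      by (intro PiE_arb[OF assms]) simp
    with False show ?thesis
      by (simp add: child_runs_def)
  qed
qed

lemma graft_runs_in_runs_at:
  assumes "q \<in> Q" "\<sigma> \<in> (\<Pi>\<^sub>E i\<in>{..<length ts}. runs Q (ts ! i))"
  shows "graft_runs f ts q \<sigma> \<in> runs_at Q q (Nd f ts)"
proof -
  have "graft_runs f ts q \<sigma> w \<in> Q" if "w \<in> pos (Nd f ts)" for w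
    using that
  proof (cases rule: pos_NdE)
    case (2 i w')
    then have "\<sigma> i \<in> pos (ts ! i) \<rightarrow>\<^sub>E Q"
      using assms(2) unfolding runs_def by blast
    then have "\<sigma> i w' \<in> Q"
      using 2(3) by (rule PiE_mem)
    with 2 show ?thesis
      by (simp add: graft_runs_def)
  qed (simp add: graft_runs_def assms(1))
  moreover have "graft_runs f ts q \<sigma> \<in> extensional (pos (Nd f ts))" "graft_runs f ts q \<sigma> [] = q"
    by (simp_all add: graft_runs_def)
  ultimately show ?thesis
    by (simp add: runs_at_def runs_def PiE_iff)
qed

lemma bij_betw_child_runs:
  assumes "q \<in> Q"
  shows "bij_betw (child_runs ts) (runs_at Q q (Nd f ts)) (\<Pi>\<^sub>E i\<in>{..<length ts}. runs Q (ts ! i))"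
proof (rule bij_betw_byWitness[where f' = "graft_runs f ts q"])
  show "child_runs ts ` runs_at Q q (Nd f ts) \<subseteq> (\<Pi>\<^sub>E i\<in>{..<length ts}. runs Q (ts ! i))"
    using child_runs_in_runs[of _ Q f ts] unfolding runs_at_def by blast
  show "graft_runs f ts q ` (\<Pi>\<^sub>E i\<in>{..<length ts}. runs Q (ts ! i)) \<subseteq> runs_at Q q (Nd f ts)"
    using graft_runs_in_runs_at[OF assms] by (rule image_subsetI)
qed (simp_all add: graft_child_runs child_graft_runs)

lemma child_runs_inject:
  assumes "\<rho> \<in> runs_at Q q (Nd f ts)" "\<rho>' \<in> runs_at Q q (Nd f ts)" "child_runs ts \<rho> = child_runs ts \<rho>'"
  shows "\<rho> = \<rho>'"
proof -
  have "\<rho> = graft_runs f ts q (child_runs ts \<rho>)"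
    using assms(1) by (rule graft_child_runs[symmetric])
  also have "\<dots> = \<rho>'"
    unfolding assms(3) using assms(2) by (rule graft_child_runs)
  finally show ?thesis .
qed

definition combine_wt :: "('q list \<Rightarrow> 'f \<Rightarrow> 'q \<Rightarrow> 'b::monoid_mult) \<Rightarrow> 'f \<Rightarrow> nat \<Rightarrow> 'q \<Rightarrow> (nat \<Rightarrow> 'q \<times> 'b) \<Rightarrow> 'b" where
  "combine_wt \<delta> f k q x = prod_list (map (\<lambda>i. snd (x i)) [0..<k]) * \<delta> (map (\<lambda>i. fst (x i)) [0..<k]) f q"

definition root_and_wt :: "('q list \<Rightarrow> 'f \<Rightarrow> 'q \<Rightarrow> 'b::monoid_mult) \<Rightarrow> 'f tree \<Rightarrow> (nat list \<Rightarrow> 'q) \<Rightarrow> 'q \<times> 'b" where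
  "root_and_wt \<delta> t \<rho> = (\<rho> [], run_wt \<delta> t \<rho>)"

lemma run_wt_child_runs:
  "i < length ts \<Longrightarrow> run_wt \<delta> (ts ! i) (child_runs ts \<rho> i) = run_wt \<delta> (ts ! i) (\<lambda>w. \<rho> (Suc i # w))"
  by (rule run_wt_cong) (simp add: child_runs_def)

lemma run_wt_eq_combine_wt:
  "run_wt \<delta> (Nd f ts) \<rho> =
     combine_wt \<delta> f (length ts) (\<rho> []) (\<lambda>i\<in>{..<length ts}. root_and_wt \<delta> (ts ! i) (child_runs ts \<rho> i))"
proof -
  have "map (\<lambda>i. run_wt \<delta> (ts ! i) (\<lambda>w. \<rho> (Suc i # w))) [0..<length ts]
      = map (\<lambda>i. snd ((\<lambda>i\<in>{..<length ts}. root_and_wt \<delta> (ts ! i) (child_runs ts \<rho> i)) i)) [0..<length ts]"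
    by (simp add: root_and_wt_def run_wt_child_runs)
  moreover have "map (\<lambda>i. \<rho> [Suc i]) [0..<length ts]
      = map (\<lambda>i. fst ((\<lambda>i\<in>{..<length ts}. root_and_wt \<delta> (ts ! i) (child_runs ts \<rho> i)) i)) [0..<length ts]"
    by (simp add: root_and_wt_def child_runs_def)
  ultimately show ?thesis
    unfolding run_wt_Nd combine_wt_def by (simp only:)
qed

lemma prod_list_nonzero_factor:
  "prod_list xs \<noteq> (0::'a::{monoid_mult,mult_zero}) \<Longrightarrow> x \<in> set xs \<Longrightarrow> x \<noteq> 0"
  by (induction xs) (auto, metis mult_zero_right)

lemma run_wt_child_runs_nonzero:
  fixes \<delta> :: "'q list \<Rightarrow> 'f \<Rightarrow> 'q \<Rightarrow> 'b::{monoid_mult,mult_zero}"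
  assumes "run_wt \<delta> (Nd f ts) \<rho> \<noteq> 0" "i < length ts"
  shows "run_wt \<delta> (ts ! i) (child_runs ts \<rho> i) \<noteq> 0"
proof -
  have "prod_list (map (\<lambda>i. run_wt \<delta> (ts ! i) (\<lambda>w. \<rho> (Suc i # w))) [0..<length ts]) \<noteq> 0"
    using assms(1) by (auto simp: run_wt_Nd)
  then have "run_wt \<delta> (ts ! i) (\<lambda>w. \<rho> (Suc i # w)) \<noteq> 0"
    by (rule prod_list_nonzero_factor) (simp add: assms(2))
  then show ?thesis
    using assms(2) by (simp add: run_wt_child_runs)
qed

lemma prod_list_mult_in_mult_closure:
  "(\<And>x. x \<in> set xs \<Longrightarrow> x \<in> mult_closure S) \<Longrightarrow> d \<in> mult_closure S \<Longrightarrow> prod_list xs * d \<in> mult_closure S"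
  by (induction xs) (auto intro: mult_closure.mult simp: mult.assoc)

lemma transition_in_H_A:
  "f \<in> Sig \<Longrightarrow> length qs = rk f \<Longrightarrow> set qs \<subseteq> Q \<Longrightarrow> q \<in> Q \<Longrightarrow> \<delta> qs f q \<in> H_A Sig rk Q \<delta>"
  unfolding H_A_def by (rule mult_closure.gen) blast

lemma run_wt_in_H_A:
  "t \<in> trees Sig rk \<Longrightarrow> \<rho> \<in> runs Q t \<Longrightarrow> run_wt \<delta> t \<rho> \<in> H_A Sig rk Q \<delta>"
proof (induction t arbitrary: \<rho> rule: trees.induct)
  case (1 f ts)
  let ?H = "H_A Sig rk Q \<delta>"
  have "run_wt \<delta> (ts ! i) (\<lambda>w. \<rho> (Suc i # w)) \<in> ?H" if "i < length ts" for i
    using 1 that child_runs_in_runs[OF "1.prems"]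
    by (auto simp flip: run_wt_child_runs[OF that] simp: PiE_iff)
  moreover have "\<delta> (map (\<lambda>i. \<rho> [Suc i]) [0..<length ts]) f (\<rho> []) \<in> ?H"
    using 1 run_root_in[OF "1.prems"] run_child_root_in[OF "1.prems"]
    by (intro transition_in_H_A) auto
  ultimately show ?case
    unfolding run_wt_Nd H_A_def by (intro prod_list_mult_in_mult_closure) auto
qed

lemma card_root_and_wt_eq:
  "card {\<rho> \<in> runs Q t. root_and_wt \<delta> t \<rho> = y} = p_xi Q \<delta> t (fst y) (snd y)"
proof -
  have "{\<rho> \<in> runs Q t. root_and_wt \<delta> t \<rho> = y} = {\<rho> \<in> runs_at Q (fst y) t. run_wt \<delta> t \<rho> = snd y}"
    by (auto simp: runs_at_def root_and_wt_def prod_eq_iff)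
  then show ?thesis
    by (simp add: p_xi_def)
qed

lemma p_xi_Nd:
  assumes "finite Q" "finite H" "q \<in> Q"
    and wt_in_H: "\<And>i \<rho>. i < length ts \<Longrightarrow> \<rho> \<in> runs Q (ts ! i) \<Longrightarrow> run_wt \<delta> (ts ! i) \<rho> \<in> H"
  shows "p_xi Q \<delta> (Nd f ts) q b =
    (\<Sum>x\<in>Pi\<^sub>E {..<length ts} (\<lambda>_. Q \<times> H).
       if combine_wt \<delta> f (length ts) q x = b
       then \<Prod>i<length ts. p_xi Q \<delta> (ts ! i) (fst (x i)) (snd (x i)) else 0)"
proof -
  let ?I = "{..<length ts}"
  let ?wt = "\<lambda>\<sigma>. combine_wt \<delta> f (length ts) q (\<lambda>i\<in>?I. root_and_wt \<delta> (ts ! i) (\<sigma> i))"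
  have "bij_betw (child_runs ts)
      {\<rho> \<in> runs_at Q q (Nd f ts). run_wt \<delta> (Nd f ts) \<rho> = b}
      {\<sigma> \<in> \<Pi>\<^sub>E i\<in>?I. runs Q (ts ! i). ?wt \<sigma> = b}"
    by (rule bij_betw_Collect[OF bij_betw_child_runs[OF assms(3)]])
      (simp add: run_wt_eq_combine_wt runs_at_def)
  then have "p_xi Q \<delta> (Nd f ts) q b = card {\<sigma> \<in> \<Pi>\<^sub>E i\<in>?I. runs Q (ts ! i). ?wt \<sigma> = b}"
    unfolding p_xi_def by (rule bij_betw_same_card)
  also have "\<dots> = (\<Sum>x\<in>Pi\<^sub>E ?I (\<lambda>_. Q \<times> H). if combine_wt \<delta> f (length ts) q x = b
      then \<Prod>i\<in>?I. card {\<rho> \<in> runs Q (ts ! i). root_and_wt \<delta> (ts ! i) \<rho> = x i} else 0)"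
  proof (rule card_PiE_filter)
    show "root_and_wt \<delta> (ts ! i) \<rho> \<in> Q \<times> H" if "i \<in> ?I" "\<rho> \<in> runs Q (ts ! i)" for i \<rho>
      using that wt_in_H run_root_in by (simp add: root_and_wt_def)
  qed (simp_all add: assms finite_runs)
  finally show ?thesis
    unfolding card_root_and_wt_eq .
qed

section \<open>Deterministic automata with 0/1 weights\<close>

fun subtree :: "'f tree \<Rightarrow> nat list \<Rightarrow> 'f tree" where
  "subtree t [] = t"
| "subtree (Nd f ts) (i # w) = subtree (ts ! (i - 1)) w"

lemma trees_NdD:
  assumes "Nd f ts \<in> trees Sig rk"
  shows "f \<in> Sig" "length ts = rk f" "\<And>t. t \<in> set ts \<Longrightarrow> t \<in> trees Sig rk"
  using assms by (auto elim: trees.cases)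

lemma subtree_in_trees: "t \<in> trees Sig rk \<Longrightarrow> w \<in> pos t \<Longrightarrow> subtree t w \<in> trees Sig rk"
proof (induction w arbitrary: t)
  case (Cons j w)
  obtain f ts where t: "t = Nd f ts"
    by (cases t)
  from Cons.prems(2) obtain i where "j = Suc i" "i < length ts" "w \<in> pos (ts ! i)"
    unfolding t by (auto elim: pos_NdE)
  moreover from this have "ts ! i \<in> trees Sig rk"
    using trees_NdD(3)[OF Cons.prems(1)[unfolded t]] by simp
  ultimately show ?case
    using Cons.IH by (simp add: t)
qed simp

definition canonical_run :: "('f tree \<Rightarrow> 'q) \<Rightarrow> 'f tree \<Rightarrow> nat list \<Rightarrow> 'q" where
  "canonical_run st t = (\<lambda>w\<in>pos t. st (subtree t w))"

locale deterministic_wta =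
  fixes Sig :: "'f set" and rk :: "'f \<Rightarrow> nat" and Q :: "'q set"
    and \<delta> :: "'q list \<Rightarrow> 'f \<Rightarrow> 'q \<Rightarrow> 'b::strong_bimonoid" and st :: "'f tree \<Rightarrow> 'q"
  assumes state_in: "t \<in> trees Sig rk \<Longrightarrow> st t \<in> Q"
    and transition_det:
      "Nd f ts \<in> trees Sig rk \<Longrightarrow> p \<in> Q \<Longrightarrow> \<delta> (map st ts) f p = (if p = st (Nd f ts) then 1 else 0)"
begin

lemma canonical_run_in_runs_at: "t \<in> trees Sig rk \<Longrightarrow> canonical_run st t \<in> runs_at Q (st t) t"
  by (auto simp: runs_at_def runs_def canonical_run_def intro: state_in subtree_in_trees)

lemma canonical_run_root [simp]: "canonical_run st t [] = st t"
  by (simp add: canonical_run_def)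

lemma child_runs_canonical_run:
  "child_runs ts (canonical_run st (Nd f ts)) = (\<lambda>i\<in>{..<length ts}. canonical_run st (ts ! i))"
  unfolding child_runs_def canonical_run_def by (intro restrict_ext) simp

lemma canonical_run_child_roots:
  "map (\<lambda>i. canonical_run st (Nd f ts) [Suc i]) [0..<length ts] = map st ts"
  by (rule nth_equalityI) (simp_all add: canonical_run_def)

lemma run_wt_canonical_run: "t \<in> trees Sig rk \<Longrightarrow> run_wt \<delta> t (canonical_run st t) = 1"
proof (induction t rule: trees.induct)
  case (1 f ts)
  then have Nd: "Nd f ts \<in> trees Sig rk"
    by (auto intro: trees.intros)
  have children: "map (\<lambda>i. run_wt \<delta> (ts ! i) (\<lambda>w. canonical_run st (Nd f ts) (Suc i # w))) [0..<length ts]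
      = map (\<lambda>_. 1) [0..<length ts]"
    using 1 by (simp flip: run_wt_child_runs add: child_runs_canonical_run)
  show ?case
    unfolding run_wt_Nd children canonical_run_child_roots
    by (simp add: transition_det[OF Nd] state_in[OF Nd] map_replicate_const)
qed

lemma nonzero_run_eq_canonical_run:
  "t \<in> trees Sig rk \<Longrightarrow> \<rho> \<in> runs Q t \<Longrightarrow> run_wt \<delta> t \<rho> \<noteq> 0 \<Longrightarrow> \<rho> = canonical_run st t"
proof (induction t arbitrary: \<rho> rule: trees.induct)
  case (1 f ts)
  then have Nd: "Nd f ts \<in> trees Sig rk"
    by (auto intro: trees.intros)
  let ?I = "{..<length ts}"
  have children: "child_runs ts \<rho> = (\<lambda>i\<in>?I. canonical_run st (ts ! i))"
  proof
    fix i
    show "child_runs ts \<rho> i = (\<lambda>i\<in>?I. canonical_run st (ts ! i)) i"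
    proof (cases "i < length ts")
      case True
      have "run_wt \<delta> (ts ! i) (child_runs ts \<rho> i) \<noteq> 0"
        using "1.prems"(2) True by (rule run_wt_child_runs_nonzero)
      moreover have "child_runs ts \<rho> i \<in> runs Q (ts ! i)"
        using child_runs_in_runs[OF "1.prems"(1)] True by auto
      ultimately show ?thesis
        using 1 True by simp
    qed (simp add: child_runs_def)
  qed
  have "\<rho> [Suc i] = st (ts ! i)" if "i < length ts" for i
    using fun_cong[OF fun_cong[OF children, of i], of "[]"] that by (simp add: child_runs_def)
  then have "map (\<lambda>i. \<rho> [Suc i]) [0..<length ts] = map st ts"
    by (intro nth_equalityI) simp_all
  then have "\<delta> (map st ts) f (\<rho> []) \<noteq> 0"
    using "1.prems"(2) by (cases "\<delta> (map st ts) f (\<rho> []) = 0") (simp_all add: run_wt_Nd)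
  then have root: "\<rho> [] = st (Nd f ts)"
    using transition_det[OF Nd run_root_in[OF "1.prems"(1)]] by (simp split: if_splits)
  have "\<rho> \<in> runs_at Q (st (Nd f ts)) (Nd f ts)"
    using "1.prems"(1) root by (simp add: runs_at_def)
  then show ?case
    using canonical_run_in_runs_at[OF Nd]
    by (rule child_runs_inject) (simp add: children child_runs_canonical_run)
qed

lemma run_sem_eq:
  assumes "finite Q" "t \<in> trees Sig rk"
  shows "run_sem Q \<delta> F t = F (st t)"
proof -
  let ?c = "canonical_run st t"
  have c: "?c \<in> runs Q t"
    using canonical_run_in_runs_at[OF assms(2)] by (simp add: runs_at_def)
  have "run_wt \<delta> t \<rho> = 0" if "\<rho> \<in> runs Q t - {?c}" for \<rho>
    using nonzero_run_eq_canonical_run[OF assms(2)] that by blast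
  then have "(\<Sum>\<rho>\<in>runs Q t - {?c}. run_wt \<delta> t \<rho> * F (\<rho> [])) = 0"
    by (intro sum.neutral) simp
  moreover have "run_sem Q \<delta> F t = run_wt \<delta> t ?c * F (?c []) + (\<Sum>\<rho>\<in>runs Q t - {?c}. run_wt \<delta> t \<rho> * F (\<rho> []))"
    unfolding run_sem_def using finite_runs[OF assms(1)] c by (rule sum.remove)
  ultimately show ?thesis
    by (simp add: run_wt_canonical_run[OF assms(2)])
qed

end

section \<open>The automaton R(A)\<close>

lemma run_sem_eq_sum_p_xi:
  assumes "finite Q" "finite H" "\<And>\<rho>. \<rho> \<in> runs Q t \<Longrightarrow> run_wt \<delta> t \<rho> \<in> H"
  shows "run_sem Q \<delta> F t = (\<Sum>(q, b)\<in>Q \<times> H. nmul (p_xi Q \<delta> t q b) (b * F q))"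
proof -
  have "run_sem Q \<delta> F t
      = (\<Sum>y\<in>Q \<times> H. \<Sum>\<rho>\<in>{\<rho> \<in> runs Q t. root_and_wt \<delta> t \<rho> = y}. run_wt \<delta> t \<rho> * F (\<rho> []))"
    unfolding run_sem_def
    by (rule sum.group[symmetric]) (auto simp: assms finite_runs root_and_wt_def run_root_in)
  also have "\<dots> = (\<Sum>y\<in>Q \<times> H. \<Sum>\<rho>\<in>{\<rho> \<in> runs Q t. root_and_wt \<delta> t \<rho> = y}. snd y * F (fst y))"
    by (intro sum.cong refl) (auto simp: root_and_wt_def)
  also have "\<dots> = (\<Sum>(q, b)\<in>Q \<times> H. nmul (p_xi Q \<delta> t q b) (b * F q))"
    by (simp add: sum_const_eq_nmul card_root_and_wt_eq case_prod_beta)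
  finally show ?thesis .
qed

lemma mult_closure_subset_mult_submonoid: "mult_closure S \<subseteq> mult_submonoid S"
proof
  fix x
  assume "x \<in> mult_closure S"
  then show "x \<in> mult_submonoid S"
    by induction (auto intro: mult_submonoid.intros)
qed

lemma finite_transitions:
  assumes "finite Sig" "finite Q"
  shows "finite {\<delta> qs f q | qs f q. f \<in> Sig \<and> length qs = rk f \<and> set qs \<subseteq> Q \<and> q \<in> Q}"
proof -
  let ?args = "(\<Union>f\<in>Sig. {qs. set qs \<subseteq> Q \<and> length qs = rk f}) \<times> Sig \<times> Q"
  have "finite ?args"
    using assms by (auto intro: finite_lists_length_eq)
  moreover have "{\<delta> qs f q | qs f q. f \<in> Sig \<and> length qs = rk f \<and> set qs \<subseteq> Q \<and> q \<in> Q}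
      \<subseteq> (\<lambda>(qs, f, q). \<delta> qs f q) ` ?args"
    by force
  ultimately show ?thesis
    by (rule finite_surj)
qed

locale bi_locally_finite_wta =
  fixes Sig :: "'f set" and rk :: "'f \<Rightarrow> nat" and Q :: "'q set"
    and \<delta> :: "'q list \<Rightarrow> 'f \<Rightarrow> 'q \<Rightarrow> 'b::strong_bimonoid" and F :: "'q \<Rightarrow> 'b"
  assumes finite_Sig: "finite Sig" and finite_Q: "finite Q"
    and bi_locally_finite: "bi_locally_finite TYPE('b)"
begin

abbreviation "H \<equiv> H_A Sig rk Q \<delta>"
abbreviation "HF \<equiv> HF_A Sig rk Q \<delta> F"
abbreviation "J \<equiv> J_A Sig rk Q \<delta> F"
abbreviation "P \<equiv> pi_xi Sig rk Q \<delta> F"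

lemma finite_H: "finite H"
proof -
  have "finite (mult_submonoid {\<delta> qs f q | qs f q. f \<in> Sig \<and> length qs = rk f \<and> set qs \<subseteq> Q \<and> q \<in> Q})"
    using bi_locally_finite finite_transitions[OF finite_Sig finite_Q]
    unfolding bi_locally_finite_def by blast
  then show ?thesis
    unfolding H_A_def by (rule finite_subset[OF mult_closure_subset_mult_submonoid])
qed

lemma finite_HF: "finite HF"
proof -
  have "HF = (\<lambda>(h, q). h * F q) ` (H \<times> Q)"
    unfolding HF_A_def by force
  then show ?thesis
    using finite_H finite_Q by simp
qed

lemma finite_add_submonoid_singleton: "finite (add_submonoid {c :: 'b})"
  using bi_locally_finite unfolding bi_locally_finite_def by simp

lemma J_eq_trunc_period: "J = trunc_period (i_A Sig rk Q \<delta> F) (p_A Sig rk Q \<delta> F)"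
  unfolding J_A_def trunc_period_def by (simp add: fun_eq_iff)

lemma nmul_J: "c \<in> HF \<Longrightarrow> nmul (J n) c = nmul n c"
  unfolding J_eq_trunc_period i_A_def p_A_def
  by (rule nmul_trunc_period[OF finite_add_submonoid_singleton]) (simp_all add: finite_HF)

lemma J_less: "J n < i_A Sig rk Q \<delta> F + p_A Sig rk Q \<delta> F"
proof -
  have "0 \<notin> per ` HF"
    using per_ge_1[OF finite_add_submonoid_singleton] by (metis imageE not_one_le_zero)
  then have "Lcm (per ` HF) \<noteq> 0"
    using finite_HF by (simp add: Lcm_0_iff)
  then have "p_A Sig rk Q \<delta> F > 0"
    unfolding p_A_def by simp
  then show ?thesis
    unfolding J_A_def by auto
qed

lemma pi_xi_eq: "y \<in> Q \<times> H \<Longrightarrow> P t y = J (p_xi Q \<delta> t (fst y) (snd y))"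
  by (cases y) (simp add: pi_xi_def)

lemma pi_xi_outside: "y \<notin> Q \<times> H \<Longrightarrow> P t y = 0"
  by (cases y) (auto simp: pi_xi_def)

lemma pi_xi_Nd:
  assumes "set ts \<subseteq> trees Sig rk" and "(q, b) \<in> Q \<times> H"
  shows "P (Nd f ts) (q, b) =
    J (\<Sum>x\<in>Pi\<^sub>E {..<length ts} (\<lambda>_. Q \<times> H).
         if combine_wt \<delta> f (length ts) q x = b then \<Prod>i<length ts. P (ts ! i) (x i) else 0)"
proof -
  let ?X = "Pi\<^sub>E {..<length ts} (\<lambda>_. Q \<times> H)"
  let ?r = "trunc_period (i_A Sig rk Q \<delta> F) (p_A Sig rk Q \<delta> F)"
  define count where "count x =
    (if combine_wt \<delta> f (length ts) q x = b then \<Prod>i<length ts. p_xi Q \<delta> (ts ! i) (fst (x i)) (snd (x i)) else 0)"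
    for x
  define count_J where "count_J x =
    (if combine_wt \<delta> f (length ts) q x = b then \<Prod>i<length ts. P (ts ! i) (x i) else 0)"
    for x
  have "?r (count x) = ?r (count_J x)" if "x \<in> ?X" for x
  proof -
    have "P (ts ! i) (x i) = ?r (p_xi Q \<delta> (ts ! i) (fst (x i)) (snd (x i)))" if "i < length ts" for i
    proof -
      have "x i \<in> Q \<times> H"
        using PiE_mem[OF \<open>x \<in> ?X\<close>] that by simp
      then show ?thesis
        by (simp add: pi_xi_eq J_eq_trunc_period)
    qed
    then show ?thesis
      unfolding count_def count_J_def
      by (simp add: trunc_period_prod[of _ _ "\<lambda>i. p_xi Q \<delta> (ts ! i) (fst (x i)) (snd (x i))"])
  qed
  then have "?r (sum count ?X) = ?r (sum count_J ?X)"
    by (subst (1 2) trunc_period_sum) (simp cong: sum.cong)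
  moreover have "p_xi Q \<delta> (Nd f ts) q b = sum count ?X"
    unfolding count_def using assms
    by (intro p_xi_Nd finite_Q finite_H) (auto intro: run_wt_in_H_A nth_mem)
  ultimately show ?thesis
    using assms(2) by (simp add: pi_xi_eq J_eq_trunc_period count_J_def)
qed

lemma pi_xi_Nd_cong:
  assumes "set ts \<subseteq> trees Sig rk" "set ts' \<subseteq> trees Sig rk"
    and "length ts = length ts'" "\<And>i. i < length ts \<Longrightarrow> P (ts ! i) = P (ts' ! i)"
  shows "P (Nd f ts) = P (Nd f ts')"
proof
  fix y :: "'q \<times> 'b"
  have same_products: "(\<Prod>i<length ts'. P (ts ! i) (x i)) = (\<Prod>i<length ts'. P (ts' ! i) (x i))" for x
    using assms(3,4) by simp
  show "P (Nd f ts) y = P (Nd f ts') y"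
  proof (cases "y \<in> Q \<times> H")
    case True
    obtain q b where y: "y = (q, b)"
      by fastforce
    with True have qb: "(q, b) \<in> Q \<times> H"
      by simp
    show ?thesis
      using pi_xi_Nd[OF assms(1) qb, of f] pi_xi_Nd[OF assms(2) qb, of f] unfolding y
      by (simp only: same_products assms(3))
  qed (simp add: pi_xi_outside)
qed

lemma finite_R_states: "finite (R_states Sig rk Q \<delta> F)"
proof (rule finite_subset)
  let ?bounded = "{\<pi>. \<forall>y. (y \<in> Q \<times> H \<longrightarrow> \<pi> y \<in> {..<i_A Sig rk Q \<delta> F + p_A Sig rk Q \<delta> F})
      \<and> (y \<notin> Q \<times> H \<longrightarrow> \<pi> y = 0)}"
  show "R_states Sig rk Q \<delta> F \<subseteq> ?bounded"
    by (auto simp: R_states_def pi_xi_def J_less)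
  show "finite ?bounded"
    by (rule finite_set_of_finite_funs) (simp_all add: finite_Q finite_H)
qed

lemma R_delta_Nd:
  assumes "Nd f ts \<in> trees Sig rk" "p \<in> R_states Sig rk Q \<delta> F"
  shows "R_delta Sig rk Q \<delta> F (map P ts) f p = (if p = P (Nd f ts) then 1 else 0)"
proof -
  let ?reps = "\<lambda>ts'. length ts' = length (map P ts)
    \<and> (\<forall>i<length (map P ts). ts' ! i \<in> trees Sig rk \<and> P (ts' ! i) = map P ts ! i)"
  define ts' where "ts' = (SOME ts'. ?reps ts')"
  have children: "set ts \<subseteq> trees Sig rk"
    using trees_NdD(3)[OF assms(1)] by blast
  then have "?reps ts"
    using nth_mem by auto
  then have "?reps ts'"
    unfolding ts'_def by (rule someI)
  then have "P (Nd f ts') = P (Nd f ts)"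
    using children by (intro pi_xi_Nd_cong) (auto simp: in_set_conv_nth)
  moreover have "f \<in> Sig \<and> length (map P ts) = rk f \<and> set (map P ts) \<subseteq> R_states Sig rk Q \<delta> F"
    using trees_NdD[OF assms(1)] by (auto simp: R_states_def)
  ultimately show ?thesis
    using assms(2) unfolding R_delta_def ts'_def[symmetric] by simp
qed

lemma deterministic_wta_R: "deterministic_wta Sig rk (R_states Sig rk Q \<delta> F) (R_delta Sig rk Q \<delta> F) P"
  by unfold_locales (auto simp: R_states_def R_delta_Nd)

lemma run_sem_R_eq_R_final: "t \<in> trees Sig rk \<Longrightarrow>
    run_sem (R_states Sig rk Q \<delta> F) (R_delta Sig rk Q \<delta> F) (R_final Sig rk Q \<delta> F) t
    = R_final Sig rk Q \<delta> F (P t)"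
  by (rule deterministic_wta.run_sem_eq[OF deterministic_wta_R finite_R_states])

lemma run_sem_eq_R_final: "t \<in> trees Sig rk \<Longrightarrow> run_sem Q \<delta> F t = R_final Sig rk Q \<delta> F (P t)"
proof -
  assume t: "t \<in> trees Sig rk"
  have "run_sem Q \<delta> F t = (\<Sum>(q, b)\<in>Q \<times> H. nmul (p_xi Q \<delta> t q b) (b * F q))"
    using t by (intro run_sem_eq_sum_p_xi finite_Q finite_H run_wt_in_H_A)
  also have "\<dots> = (\<Sum>(q, b)\<in>Q \<times> H. nmul (P t (q, b)) (b * F q))"
  proof (intro sum.cong refl, clarify)
    fix q b
    assume "q \<in> Q" "b \<in> H"
    then have "b * F q \<in> HF"
      unfolding HF_A_def by blast
    then show "nmul (p_xi Q \<delta> t q b) (b * F q) = nmul (P t (q, b)) (b * F q)"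
      using \<open>q \<in> Q\<close> \<open>b \<in> H\<close> by (simp add: pi_xi_eq nmul_J)
  qed
  finally show ?thesis
    by (simp add: R_final_def)
qed

end

theorem corollary7p5:
  fixes Sig :: "'f set" and rk :: "'f \<Rightarrow> nat"
    and Q :: "'q set" and \<delta> :: "'q list \<Rightarrow> 'f \<Rightarrow> 'q \<Rightarrow> 'b::strong_bimonoid" and F :: "'q \<Rightarrow> 'b"
  assumes "ranked_alphabet Sig rk"
    and "bi_locally_finite TYPE('b)"
    and "wta Sig rk Q \<delta> F"
  shows "\<forall>\<xi>\<in>trees Sig rk.
           run_sem Q \<delta> F \<xi> =
           run_sem (R_states Sig rk Q \<delta> F) (R_delta Sig rk Q \<delta> F) (R_final Sig rk Q \<delta> F) \<xi>"
proof -
  interpret bi_locally_finite_wta Sig rk Q \<delta> F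
    using assms unfolding ranked_alphabet_def wta_def by unfold_locales auto
  show ?thesis
    using run_sem_eq_R_final run_sem_R_eq_R_final by simp
qed

end
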